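(* Let $(\mathcal M,g)$ be an $n$-dimensional Lorentzian manifold ($n\ge3$) with a concircularly semi-symmetric metric connection $\overset{1}{\nabla}$ whose associated vector field $P$ satisfies $g(P,P)=-1$. Then $(\mathcal M,g,\overset{1}{\nabla})$ is an Einstein type manifold of the zeroth kind (i.e. $\overset{0}{Ric}=\frac{\overset{0}{r}}{n}g$) if and only if it is a perfect fluid space-time whose Ricci tensor is $\overset{g}{Ric}=\frac{n-1}{4}(5g+\pi\otimes\pi)$; in that case the scalar curvature is constant, $4\overset{g}{r}=(n-1)(5n-1)$.
   Context: Let $(\mathcal M,g)$ be an $n$-dimensional pseudo-Riemannian manifold with Levi-Civita connection $\overset{g}{\nabla}$, let $P$ be a vector field and $\pi=g(\cdot,P)$ its associated 1-form. The semi-symmetric metric connection generated by $\pi$ is $\overset{1}{\nabla}_XY=\overset{g}{\nabla}_XY+\pi(Y)X-g(X,Y)P$; it satisfies $\overset{1}{\nabla}g=0$ and has torsion $\overset{1}{T}(X,Y)=\pi(Y)X-\pi(X)Y$. It is called a concircularly semi-symmetric metric connection if there is a smooth function $\omega$ on $\mathcal M$ such that $(\overset{g}{\nabla}_X\pi)(Y)-\pi(X)\pi(Y)=\omega\, g(X,Y)$ for all vector fields $X,Y$. Curvature tensors: $\overset{1}{R}(X,Y)Z=\overset{1}{\nabla}_X\overset{1}{\nabla}_YZ-\overset{1}{\nabla}_Y\overset{1}{\nabla}_XZ-\overset{1}{\nabla}_{[X,Y]}Z$, and with $\mathfrak S_{XYZ}$ the cyclic sum over $X,Y,Z$: $\overset{0}{R}(X,Y)Z=\overset{1}{R}(X,Y)Z-\tfrac12(\overset{1}{\nabla}_X\overset{1}{T})(Y,Z)+\tfrac12(\overset{1}{\nabla}_Y\overset{1}{T})(X,Z)-\tfrac14\mathfrak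 S_{XYZ}\overset{1}{T}(\overset{1}{T}(X,Y),Z)-\tfrac14\overset{1}{T}(\overset{1}{T}(X,Y),Z)$. The Ricci tensors are $\overset{\theta}{Ric}(Y,Z)=\mathrm{tr}(X\mapsto \overset{\theta}{R}(X,Y)Z)$, and $\overset{g}{Ric}$ is the Ricci tensor of $\overset{g}{\nabla}$ defined the same way; $\overset{\theta}{r}$ and $\overset{g}{r}$ are their $g$-traces. A Lorentzian manifold is a perfect fluid space-time if $\overset{g}{Ric}=ag+b\,\pi\otimes\pi$ for scalar functions $a,b$. *)

theory Defs
  imports "HOL-Analysis.Analysis"
begin

text \<open>Local-coordinate model: the manifold is an open set U of real^'n (a chart),
 dimension n = CARD('n).\<close>

type_synonym ('n) vfield = "real^'n \<Rightarrow> real^'n"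

definition ddir :: "(real^'n::finite \<Rightarrow> 'b::real_normed_vector) \<Rightarrow> 'n vfield \<Rightarrow> real^'n \<Rightarrow> 'b" where
  "ddir f X x = frechet_derivative f (at x) (X x)"

fun smooth_k :: "nat \<Rightarrow> (real^'n::finite) set \<Rightarrow> (real^'n \<Rightarrow> 'b::real_normed_vector) \<Rightarrow> bool" where
  "smooth_k 0 U f = continuous_on U f"
| "smooth_k (Suc k) U f =
     (f differentiable_on U \<and> (\<forall>v. smooth_k k U (\<lambda>x. frechet_derivative f (at x) v)))"

definition smooth_on :: "(real^'n::finite) set \<Rightarrow> (real^'n \<Rightarrow> 'b::real_normed_vector) \<Rightarrow> bool" where
  "smooth_on U f \<longleftrightarrow> (\<forall>k. smooth_k k U f)"

definition gm :: "(real^'n::finite \<Rightarrow> real^'n^'n) \<Rightarrow> 'n vfield \<Rightarrow> 'n vfield \<Rightarrow> real^'n \<Rightarrow> real" where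
  "gm g X Y x = X x \<bullet> (g x *v Y x)"

definition lorentzian_metric :: "(real^'n::finite) set \<Rightarrow> (real^'n \<Rightarrow> real^'n^'n) \<Rightarrow> bool" where
  "lorentzian_metric U g \<longleftrightarrow> smooth_on U g \<and>
     (\<forall>x\<in>U. transpose (g x) = g x \<and>
        (\<exists>i0 (A::real^'n^'n). invertible A \<and>
           transpose A ** g x ** A = (\<chi> i j. if i = j then (if i = i0 then -1 else 1) else 0)))"

definition coord_vf :: "'n::finite \<Rightarrow> 'n vfield" where
  "coord_vf i = (\<lambda>x. axis i 1)"

definition christoffel :: "(real^'n::finite \<Rightarrow> real^'n^'n) \<Rightarrow> real^'n \<Rightarrow> 'n \<Rightarrow> 'n \<Rightarrow> 'n \<Rightarrow> real" where
  "christoffel g x k i j = (1/2) * (\<Sum>l\<in>UNIV. matrix_inv (g x) $ k $ l *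
      (frechet_derivative g (at x) (axis i 1) $ j $ l
       + frechet_derivative g (at x) (axis j 1) $ i $ l
       - frechet_derivative g (at x) (axis l 1) $ i $ j))"

definition lc_nabla :: "(real^'n::finite \<Rightarrow> real^'n^'n) \<Rightarrow> 'n vfield \<Rightarrow> 'n vfield \<Rightarrow> 'n vfield" where
  "lc_nabla g X Y x = ddir Y X x +
     (\<chi> k. \<Sum>i\<in>UNIV. \<Sum>j\<in>UNIV. christoffel g x k i j * X x $ i * Y x $ j)"

definition piform :: "(real^'n::finite \<Rightarrow> real^'n^'n) \<Rightarrow> 'n vfield \<Rightarrow> 'n vfield \<Rightarrow> real^'n \<Rightarrow> real" where
  "piform g P X x = gm g X P x"

definition cov_piform :: "(real^'n::finite \<Rightarrow> real^'n^'n) \<Rightarrow> 'n vfield \<Rightarrow> 'n vfield \<Rightarrow> 'n vfield \<Rightarrow> real^'n \<Rightarrow> real" where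
  "cov_piform g P X Y x = ddir (piform g P Y) X x - piform g P (lc_nabla g X Y) x"

definition nabla1 :: "(real^'n::finite \<Rightarrow> real^'n^'n) \<Rightarrow> 'n vfield \<Rightarrow> 'n vfield \<Rightarrow> 'n vfield \<Rightarrow> 'n vfield" where
  "nabla1 g P X Y x = lc_nabla g X Y x + piform g P Y x *\<^sub>R X x - gm g X Y x *\<^sub>R P x"

definition torsion1 :: "(real^'n::finite \<Rightarrow> real^'n^'n) \<Rightarrow> 'n vfield \<Rightarrow> 'n vfield \<Rightarrow> 'n vfield \<Rightarrow> 'n vfield" where
  "torsion1 g P X Y x = piform g P Y x *\<^sub>R X x - piform g P X x *\<^sub>R Y x"

definition lie_bracket :: "'n::finite vfield \<Rightarrow> 'n vfield \<Rightarrow> 'n vfield" where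
  "lie_bracket X Y x = ddir Y X x - ddir X Y x"

definition curv :: "('n::finite vfield \<Rightarrow> 'n vfield \<Rightarrow> 'n vfield) \<Rightarrow> 'n vfield \<Rightarrow> 'n vfield \<Rightarrow> 'n vfield \<Rightarrow> 'n vfield" where
  "curv nab X Y Z x = nab X (nab Y Z) x - nab Y (nab X Z) x - nab (lie_bracket X Y) Z x"

definition cov_torsion :: "('n::finite vfield \<Rightarrow> 'n vfield \<Rightarrow> 'n vfield) \<Rightarrow> ('n vfield \<Rightarrow> 'n vfield \<Rightarrow> 'n vfield)
    \<Rightarrow> 'n vfield \<Rightarrow> 'n vfield \<Rightarrow> 'n vfield \<Rightarrow> 'n vfield" where
  "cov_torsion nab T X Y Z x = nab X (T Y Z) x - T (nab X Y) Z x - T Y (nab X Z) x"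

definition curv0 :: "(real^'n::finite \<Rightarrow> real^'n^'n) \<Rightarrow> 'n vfield \<Rightarrow> 'n vfield \<Rightarrow> 'n vfield \<Rightarrow> 'n vfield \<Rightarrow> 'n vfield" where
  "curv0 g P X Y Z x =
     (let T = torsion1 g P; nab = nabla1 g P in
      curv nab X Y Z x
      - (1/2) *\<^sub>R cov_torsion nab T X Y Z x
      + (1/2) *\<^sub>R cov_torsion nab T Y X Z x
      - (1/4) *\<^sub>R (T (T X Y) Z x + T (T Y Z) X x + T (T Z X) Y x)
      - (1/4) *\<^sub>R T (T X Y) Z x)"

definition ricci :: "('n::finite vfield \<Rightarrow> 'n vfield \<Rightarrow> 'n vfield \<Rightarrow> 'n vfield) \<Rightarrow> 'n vfield \<Rightarrow> 'n vfield \<Rightarrow> real^'n \<Rightarrow> real" where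
  "ricci R Y Z x = (\<Sum>i\<in>UNIV. R (coord_vf i) Y Z x $ i)"

definition scal :: "(real^'n::finite \<Rightarrow> real^'n^'n) \<Rightarrow> ('n vfield \<Rightarrow> 'n vfield \<Rightarrow> real^'n \<Rightarrow> real) \<Rightarrow> real^'n \<Rightarrow> real" where
  "scal g Ric x = (\<Sum>i\<in>UNIV. \<Sum>j\<in>UNIV. matrix_inv (g x) $ i $ j * Ric (coord_vf i) (coord_vf j) x)"

definition ricci_g :: "(real^'n::finite \<Rightarrow> real^'n^'n) \<Rightarrow> 'n vfield \<Rightarrow> 'n vfield \<Rightarrow> real^'n \<Rightarrow> real" where
  "ricci_g g = ricci (curv (lc_nabla g))"

definition ricci0 :: "(real^'n::finite \<Rightarrow> real^'n^'n) \<Rightarrow> 'n vfield \<Rightarrow> 'n vfield \<Rightarrow> 'n vfield \<Rightarrow> real^'n \<Rightarrow> real" where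
  "ricci0 g P = ricci (curv0 g P)"

definition concircular :: "(real^'n::finite) set \<Rightarrow> (real^'n \<Rightarrow> real^'n^'n) \<Rightarrow> 'n vfield \<Rightarrow> (real^'n \<Rightarrow> real) \<Rightarrow> bool" where
  "concircular U g P \<omega> \<longleftrightarrow> smooth_on U \<omega> \<and>
     (\<forall>X Y. smooth_on U X \<longrightarrow> smooth_on U Y \<longrightarrow>
        (\<forall>x\<in>U. cov_piform g P X Y x - piform g P X x * piform g P Y x = \<omega> x * gm g X Y x))"

definition einstein_zeroth :: "(real^'n::finite) set \<Rightarrow> (real^'n \<Rightarrow> real^'n^'n) \<Rightarrow> 'n vfield \<Rightarrow> bool" where
  "einstein_zeroth U g P \<longleftrightarrow>
     (\<forall>Y Z. smooth_on U Y \<longrightarrow> smooth_on U Z \<longrightarrow>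
        (\<forall>x\<in>U. ricci0 g P Y Z x = scal g (ricci0 g P) x / real CARD('n) * gm g Y Z x))"

definition perfect_fluid :: "(real^'n::finite) set \<Rightarrow> (real^'n \<Rightarrow> real^'n^'n) \<Rightarrow> 'n vfield \<Rightarrow> bool" where
  "perfect_fluid U g P \<longleftrightarrow>
     (\<exists>a b :: real^'n \<Rightarrow> real. \<forall>Y Z. smooth_on U Y \<longrightarrow> smooth_on U Z \<longrightarrow>
        (\<forall>x\<in>U. ricci_g g Y Z x = a x * gm g Y Z x + b x * piform g P Y x * piform g P Z x))"

end

theory Submission
  imports Defs
begin

text \<open>
  Concircularity says \<open>\<nabla>\<pi> = \<pi> \<otimes> \<pi> + \<omega> g\<close>, i.e. \<open>\<nabla>\<^sub>X P = \<omega> X + \<pi>(X) P\<close>.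
  Differentiating \<open>g(P,P) = -1\<close> along \<open>P\<close> then forces \<open>\<omega> = 1\<close>, so \<open>P\<close> is a geodesic field
  with \<open>\<nabla>\<^sub>X P = X + \<pi>(X) P\<close>.  Substituting this into the definition of \<open>R\<^sup>0\<close> leaves
  \<open>R\<^sup>0(X,Y)Z = R(X,Y)Z + g(X,Z) Y - g(Y,Z) X - \<pi>(Z) (\<pi>(Y) X - \<pi>(X) Y) / 4\<close>,
  hence \<open>Ric\<^sup>0 = Ric - (n - 1) g - (n - 1)/4 \<pi> \<otimes> \<pi>\<close>, while \<open>R(X,P)P = -X - \<pi>(X) P\<close> gives
  \<open>Ric(P,P) = -(n - 1)\<close>.  If \<open>Ric\<^sup>0 = c g\<close>, evaluating at \<open>(P,P)\<close> yields \<open>c = (n - 1)/4\<close> and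
  thus \<open>Ric = (n - 1)/4 (5 g + \<pi> \<otimes> \<pi>)\<close>; conversely this Ricci tensor makes \<open>Ric\<^sup>0\<close> a multiple
  of \<open>g\<close>.  Tracing with \<open>g\<inverse>\<close>, where \<open>g\<inverse>(\<pi>,\<pi>) = g(P,P) = -1\<close>, gives the scalar curvature.
\<close>

lemma frechet_derivative_apply:
  "(f has_derivative f') (at x) \<Longrightarrow> frechet_derivative f (at x) v = f' v"
  by (metis frechet_derivative_at)

lemma frechet_derivative_add:
  assumes "f differentiable (at x)" "h differentiable (at x)"
  shows "frechet_derivative (\<lambda>y. f y + h y) (at x) v
       = frechet_derivative f (at x) v + frechet_derivative h (at x) v"
  by (rule frechet_derivative_apply)
    (intro has_derivative_add assms[unfolded frechet_derivative_works])

lemma frechet_derivative_diff: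
  assumes "f differentiable (at x)" "h differentiable (at x)"
  shows "frechet_derivative (\<lambda>y. f y - h y) (at x) v
       = frechet_derivative f (at x) v - frechet_derivative h (at x) v"
  by (rule frechet_derivative_apply)
    (intro has_derivative_diff assms[unfolded frechet_derivative_works])

lemma frechet_derivative_scaleR:
  assumes "f differentiable (at x)" "h differentiable (at x)"
  shows "frechet_derivative (\<lambda>y. f y *\<^sub>R h y) (at x) v
       = f x *\<^sub>R frechet_derivative h (at x) v + frechet_derivative f (at x) v *\<^sub>R h x"
  by (rule frechet_derivative_apply)
    (intro has_derivative_scaleR assms[unfolded frechet_derivative_works])

lemma frechet_derivative_mult:
  fixes f h :: "'a::real_normed_vector \<Rightarrow> 'b::real_normed_algebra"
  assumes "f differentiable (at x)" "h differentiable (at x)"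
  shows "frechet_derivative (\<lambda>y. f y * h y) (at x) v
       = f x * frechet_derivative h (at x) v + frechet_derivative f (at x) v * h x"
  by (rule frechet_derivative_apply)
    (intro has_derivative_mult assms[unfolded frechet_derivative_works])

lemma frechet_derivative_sum:
  assumes "\<And>i. i \<in> I \<Longrightarrow> f i differentiable (at x)"
  shows "frechet_derivative (\<lambda>y. \<Sum>i\<in>I. f i y) (at x) v = (\<Sum>i\<in>I. frechet_derivative (f i) (at x) v)"
  by (rule frechet_derivative_apply)
    (intro has_derivative_sum assms[unfolded frechet_derivative_works])

lemma frechet_derivative_vec_nth:
  assumes "f differentiable (at x)"
  shows "frechet_derivative (\<lambda>y. f y $ i) (at x) v = frechet_derivative f (at x) v $ i"
  by (rule frechet_derivative_apply)
    (intro bounded_linear.has_derivative[OF bounded_linear_vec_nth] assms[unfolded frechet_derivative_works])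

lemma differentiable_vec_nth: "f differentiable F \<Longrightarrow> (\<lambda>y. f y $ i) differentiable F"
  unfolding differentiable_def
  using bounded_linear.has_derivative[OF bounded_linear_vec_nth] by blast

lemma bounded_linear_axis: "bounded_linear (axis k :: 'a::real_normed_vector \<Rightarrow> 'a^'n)"
proof (rule bounded_linear_intro[where K=1])
  show "axis k (x + y) = axis k x + axis k y" for x y :: 'a
    by (simp add: axis_def vec_eq_iff)
  show "axis k (r *\<^sub>R x) = r *\<^sub>R axis k x" for r and x :: 'a
    by (simp add: axis_def vec_eq_iff)
  show "norm (axis k x :: 'a^'n) \<le> norm x * 1" for x :: 'a
  proof -
    have "norm (axis k x :: 'a^'n) \<le> (\<Sum>i\<in>UNIV. norm ((axis k x :: 'a^'n) $ i))"
      unfolding norm_vec_def by (rule L2_set_le_sum) auto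
    also have "\<dots> = norm x"
      by (simp add: axis_def if_distrib cong: if_cong)
    finally show ?thesis by simp
  qed
qed

lemma vec_lambda_eq_sum_axis: "(\<chi> k. f k) = (\<Sum>k\<in>UNIV. axis k (f k))"
  by (simp add: vec_eq_iff sum_component axis_def if_distrib cong: if_cong)

lemma differentiable_vec_lambda:
  fixes f :: "'n::finite \<Rightarrow> 'a::real_normed_vector \<Rightarrow> 'b::real_normed_vector"
  assumes "\<And>k. f k differentiable F"
  shows "(\<lambda>y. \<chi> k. f k y) differentiable F"
proof -
  have "(\<lambda>y. axis k (f k y)) differentiable F" for k
    using assms[of k] bounded_linear.has_derivative[OF bounded_linear_axis]
    unfolding differentiable_def by blast
  then show ?thesis
    unfolding vec_lambda_eq_sum_axis by (intro differentiable_sum) auto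
qed

lemma differentiable_prod:
  fixes f :: "'i \<Rightarrow> 'a::real_normed_vector \<Rightarrow> 'b::real_normed_field"
  assumes "\<And>i. i \<in> I \<Longrightarrow> f i differentiable (at x within S)"
  shows "(\<lambda>y. \<Prod>i\<in>I. f i y) differentiable (at x within S)"
proof -
  obtain D where "\<And>i. i \<in> I \<Longrightarrow> (f i has_derivative D i) (at x within S)"
    using assms unfolding differentiable_def by metis
  then show ?thesis
    unfolding differentiable_def by (blast intro: has_derivative_prod)
qed

lemma differentiable_det:
  fixes M :: "'a::real_normed_vector \<Rightarrow> real^'n^'n"
  assumes "M differentiable (at x within S)"
  shows "(\<lambda>y. det (M y)) differentiable (at x within S)"
  unfolding det_def
  using assms by (intro differentiable_sum differentiable_mult differentiable_const
      differentiable_prod differentiable_vec_nth ballI finite_permutations finite)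

lemma differentiable_on_vec_nth: "f differentiable_on S \<Longrightarrow> (\<lambda>y. f y $ i) differentiable_on S"
  unfolding differentiable_on_def by (simp add: differentiable_vec_nth)

lemma differentiable_on_vec_lambda:
  fixes f :: "'n::finite \<Rightarrow> 'a::real_normed_vector \<Rightarrow> 'b::real_normed_vector"
  shows "(\<And>k. f k differentiable_on S) \<Longrightarrow> (\<lambda>y. \<chi> k. f k y) differentiable_on S"
  unfolding differentiable_on_def by (simp add: differentiable_vec_lambda)

lemma differentiable_on_sum:
  "finite I \<Longrightarrow> (\<And>i. i \<in> I \<Longrightarrow> f i differentiable_on S) \<Longrightarrow> (\<lambda>y. \<Sum>i\<in>I. f i y) differentiable_on S"
  unfolding differentiable_on_def by simp

lemma differentiable_on_inner:
  "f differentiable_on S \<Longrightarrow> h differentiable_on S \<Longrightarrow> (\<lambda>y. f y \<bullet> h y) differentiable_on S"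
  unfolding differentiable_on_def by simp

lemma differentiable_on_matrix_vector_mult:
  fixes M :: "'a::real_normed_vector \<Rightarrow> real^'k::finite^'m::finite"
  assumes "M differentiable_on S" "V differentiable_on S"
  shows "(\<lambda>y. M y *v V y) differentiable_on S"
  unfolding matrix_vector_mult_def
  using assms by (intro differentiable_on_vec_lambda differentiable_on_sum differentiable_on_mult
      differentiable_on_vec_nth finite)

lemma differentiable_on_cong:
  assumes "\<And>y. y \<in> S \<Longrightarrow> f y = h y" "f differentiable_on S"
  shows "h differentiable_on S"
  using assms differentiable_transform_within[OF _ zero_less_one]
  unfolding differentiable_on_def by metis

lemma invertible_matrix_inv:
  assumes "invertible (A::real^'n^'n)"
  shows "A ** matrix_inv A = mat 1" and "matrix_inv A ** A = mat 1"
proof -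
  have "\<exists>A'. A ** A' = mat 1 \<and> A' ** A = mat 1"
    using assms unfolding invertible_def by blast
  then have "A ** matrix_inv A = mat 1 \<and> matrix_inv A ** A = mat 1"
    unfolding matrix_inv_def by (rule someI_ex)
  then show "A ** matrix_inv A = mat 1" "matrix_inv A ** A = mat 1" by auto
qed

lemma matrix_vector_mult_axis: "((M::real^'n^'m) *v axis l 1) $ k = M $ k $ l"
  by (simp add: matrix_vector_mult_def axis_def if_distrib cong: if_cong)

lemma matrix_inv_entry_cramer:
  assumes "invertible (A::real^'n^'n)"
  shows "matrix_inv A $ k $ l = det (\<chi> i j. if j = k then axis l 1 $ i else A $ i $ j) / det A"
proof -
  have "det A \<noteq> 0"
    using assms invertible_det_nz by blast
  moreover have "A *v (matrix_inv A *v axis l 1) = axis l 1"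
    by (simp add: matrix_vector_mul_assoc invertible_matrix_inv[OF assms])
  ultimately have "matrix_inv A *v axis l 1 = (\<chi> k. det (\<chi> i j. if j = k then axis l 1 $ i else A $ i $ j) / det A)"
    using cramer by blast
  then have "(matrix_inv A *v axis l 1) $ k = det (\<chi> i j. if j = k then axis l 1 $ i else A $ i $ j) / det A"
    by simp
  then show ?thesis
    by (simp add: matrix_vector_mult_axis)
qed

lemma differentiable_on_matrix_inv_entry:
  fixes M :: "'a::real_normed_vector \<Rightarrow> real^'n^'n"
  assumes "M differentiable_on S" "\<And>y. y \<in> S \<Longrightarrow> invertible (M y)"
  shows "(\<lambda>y. matrix_inv (M y) $ k $ l) differentiable_on S"
proof (rule differentiable_on_cong)
  let ?A = "\<lambda>y. \<chi> i j. if j = k then axis l 1 $ i else M y $ i $ j"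
  show "det (?A y) / det (M y) = matrix_inv (M y) $ k $ l" if "y \<in> S" for y
    by (simp add: matrix_inv_entry_cramer assms(2) that)
  have "(\<lambda>y. if j = k then axis l 1 $ i else M y $ i $ j) differentiable_on S" for i j
    using assms(1) by (cases "j = k") (simp_all add: differentiable_on_vec_nth)
  then have "?A differentiable_on S"
    by (intro differentiable_on_vec_lambda)
  then show "(\<lambda>y. det (?A y) / det (M y)) differentiable_on S"
    using assms unfolding differentiable_on_def
    by (auto intro!: differentiable_divide differentiable_det simp: invertible_det_nz)
qed

lemma linear_apply_eq_sum_axis:
  fixes L :: "real^'n \<Rightarrow> 'b::real_vector"
  assumes "linear L"
  shows "L v = (\<Sum>i\<in>UNIV. v $ i *\<^sub>R L (axis i 1))"
proof -
  have "L v = L (\<Sum>i\<in>UNIV. v $ i *\<^sub>R axis i 1)"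
    using basis_expansion[of v] by (simp add: scalar_mult_eq_scaleR)
  also have "\<dots> = (\<Sum>i\<in>UNIV. v $ i *\<^sub>R L (axis i 1))"
    by (simp add: real_vector.linear_sum[OF assms] linear_cmul[OF assms])
  finally show ?thesis .
qed

lemma smooth_k_const: "smooth_k k U (\<lambda>_. c)"
  by (induction k arbitrary: c) (auto simp: continuous_on_const)

lemma smooth_on_const: "smooth_on U (\<lambda>_. c)"
  by (simp add: smooth_on_def smooth_k_const)

lemma smooth_on_imp_differentiable_on: "smooth_on U f \<Longrightarrow> f differentiable_on U"
  unfolding smooth_on_def by (metis smooth_k.simps(2))

lemma smooth_on_frechet_derivative:
  "smooth_on U f \<Longrightarrow> smooth_on U (\<lambda>y. frechet_derivative f (at y) v)"
  unfolding smooth_on_def by (metis smooth_k.simps(2))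

lemma sum_rotate_three:
  "(\<Sum>l\<in>A. \<Sum>i\<in>B. \<Sum>j\<in>C. f i j l) = (\<Sum>i\<in>B. \<Sum>j\<in>C. \<Sum>l\<in>A. f i j l)"
proof -
  have "(\<Sum>l\<in>A. \<Sum>i\<in>B. \<Sum>j\<in>C. f i j l) = (\<Sum>i\<in>B. \<Sum>l\<in>A. \<Sum>j\<in>C. f i j l)"
    by (rule sum.swap)
  also have "\<dots> = (\<Sum>i\<in>B. \<Sum>j\<in>C. \<Sum>l\<in>A. f i j l)"
    by (rule sum.cong[OF refl], rule sum.swap)
  finally show ?thesis .
qed

lemma inner_matrix_vector_mult_sum:
  "u \<bullet> (M *v w) = (\<Sum>i\<in>UNIV. \<Sum>j\<in>UNIV. u $ i * (M $ i $ j * w $ j))"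
  by (simp add: inner_vec_def matrix_vector_mult_def sum_distrib_left)

lemma symmetric_matrix_inner:
  fixes G :: "real^'n^'n"
  assumes "transpose G = G"
  shows "u \<bullet> (G *v w) = w \<bullet> (G *v u)"
  by (metis assms dot_lmul_matrix inner_commute transpose_matrix_vector)

lemma symmetric_matrix_entry:
  assumes "transpose A = A"
  shows "A $ i $ j = A $ j $ i"
proof -
  have "A $ i $ j = transpose A $ i $ j"
    by (simp add: assms)
  also have "\<dots> = A $ j $ i"
    by (simp add: transpose_def)
  finally show ?thesis .
qed

lemma sign_diagonal_squared:
  fixes i0 :: "'n::finite"
  defines "J \<equiv> (\<chi> i j. if i = j then (if i = i0 then -1 else 1) else 0) :: real^'n^'n"
  shows "J ** J = mat 1"
proof -
  have "(\<Sum>k\<in>UNIV. J $ i $ k * J $ k $ j) = (if i = j then 1 else 0)" for i j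
  proof -
    have "(\<Sum>k\<in>UNIV. J $ i $ k * J $ k $ j) = (\<Sum>k\<in>UNIV. if k = i then J $ i $ i * J $ i $ j else 0)"
      by (rule sum.cong) (auto simp: J_def)
    then show ?thesis
      by (simp add: J_def)
  qed
  then show ?thesis
    by (simp add: matrix_matrix_mult_def mat_def vec_eq_iff)
qed

lemma frechet_derivative_gm:
  assumes Y: "Y differentiable (at x)" and Z: "Z differentiable (at x)" and g: "g differentiable (at x)"
  shows "frechet_derivative (gm g Y Z) (at x) v
       = frechet_derivative Y (at x) v \<bullet> (g x *v Z x) + Y x \<bullet> (g x *v frechet_derivative Z (at x) v)
         + Y x \<bullet> (frechet_derivative g (at x) v *v Z x)"
proof -
  have dY: "(\<lambda>y. Y y $ i) differentiable (at x)" for i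
    using Y by (rule differentiable_vec_nth)
  have dZ: "(\<lambda>y. Z y $ i) differentiable (at x)" for i
    using Z by (rule differentiable_vec_nth)
  have dg1: "(\<lambda>y. g y $ i) differentiable (at x)" for i
    using g by (rule differentiable_vec_nth)
  have dg: "(\<lambda>y. g y $ i $ j) differentiable (at x)" for i j
    using dg1 by (rule differentiable_vec_nth)
  have "gm g Y Z = (\<lambda>y. \<Sum>i\<in>UNIV. \<Sum>j\<in>UNIV. Y y $ i * (g y $ i $ j * Z y $ j))"
    by (simp add: fun_eq_iff gm_def inner_matrix_vector_mult_sum)
  then have "frechet_derivative (gm g Y Z) (at x) v = (\<Sum>i\<in>UNIV. \<Sum>j\<in>UNIV.
       Y x $ i * (g x $ i $ j * frechet_derivative Z (at x) v $ j
         + frechet_derivative g (at x) v $ i $ j * Z x $ j)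
       + frechet_derivative Y (at x) v $ i * (g x $ i $ j * Z x $ j))"
    by (simp add: frechet_derivative_sum frechet_derivative_mult frechet_derivative_vec_nth
        dY dZ dg dg1 Y Z g)
  then show ?thesis
    by (simp add: inner_matrix_vector_mult_sum algebra_simps sum.distrib)
qed

lemma christoffel_first_kind_sum:
  fixes a :: "'n::finite \<Rightarrow> real^'n^'n" and v Y Z :: "real^'n"
  assumes a_sym: "\<And>i. transpose (a i) = a i"
  defines "C W \<equiv> (\<chi> l. \<Sum>i\<in>UNIV. \<Sum>j\<in>UNIV. 1/2 * (v$i * W$j * (a i $j$l + a j$i$l - a l$i$j)))"
  shows "C Y \<bullet> Z + Y \<bullet> C Z = (\<Sum>i\<in>UNIV. v$i * (Y \<bullet> (a i *v Z)))"
proof -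
  define c where "c i j l = a i $j$l + a j$i$l - a l$i$j" for i j l
  have a_entry: "a i $ j $ l = a i $ l $ j" for i j l
    by (rule symmetric_matrix_entry[OF a_sym])
  have CY: "C Y \<bullet> Z = (\<Sum>i\<in>UNIV. \<Sum>j\<in>UNIV. \<Sum>l\<in>UNIV. 1/2 * (v$i * Y$j * Z$l * c i j l))"
  proof -
    have "C Y \<bullet> Z = (\<Sum>l\<in>UNIV. \<Sum>i\<in>UNIV. \<Sum>j\<in>UNIV. 1/2 * (v$i * Y$j * Z$l * c i j l))"
      by (simp add: C_def c_def inner_vec_def sum_distrib_left sum_distrib_right mult_ac)
    also have "\<dots> = (\<Sum>i\<in>UNIV. \<Sum>j\<in>UNIV. \<Sum>l\<in>UNIV. 1/2 * (v$i * Y$j * Z$l * c i j l))"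
      by (rule sum_rotate_three)
    finally show ?thesis .
  qed
  have CZ: "Y \<bullet> C Z = (\<Sum>i\<in>UNIV. \<Sum>j\<in>UNIV. \<Sum>l\<in>UNIV. 1/2 * (v$i * Y$j * Z$l * c i l j))"
  proof -
    have "Y \<bullet> C Z = (\<Sum>j\<in>UNIV. \<Sum>i\<in>UNIV. \<Sum>l\<in>UNIV. 1/2 * (v$i * Y$j * Z$l * c i l j))"
      by (simp add: C_def c_def inner_vec_def sum_distrib_left sum_distrib_right mult_ac)
    also have "\<dots> = (\<Sum>i\<in>UNIV. \<Sum>j\<in>UNIV. \<Sum>l\<in>UNIV. 1/2 * (v$i * Y$j * Z$l * c i l j))"
      by (rule sum.swap)
    finally show ?thesis .
  qed
  have rhs: "(\<Sum>i\<in>UNIV. v$i * (Y \<bullet> (a i *v Z)))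
      = (\<Sum>i\<in>UNIV. \<Sum>j\<in>UNIV. \<Sum>l\<in>UNIV. v$i * Y$j * Z$l * a i $j$l)"
    by (simp add: inner_vec_def matrix_vector_mult_def sum_distrib_left mult_ac)
  \<comment> \<open>the two terms add up because \<open>c i j l + c i l j = 2 a i $ j $ l\<close>\<close>
  have c_sum: "1/2 * (v$i * Y$j * Z$l * c i j l) + 1/2 * (v$i * Y$j * Z$l * c i l j)
      = v$i * Y$j * Z$l * a i $j$l" for i j l
    unfolding c_def using a_entry[of i j l] a_entry[of j i l] a_entry[of l i j]
    by (simp add: algebra_simps)
  show ?thesis
    unfolding CY CZ rhs by (simp only: sum.distrib[symmetric] c_sum)
qed

text \<open>Metric compatibility in coordinates: for \<open>a i = \<partial>\<^sub>i G\<close>, \<open>\<Gamma> W\<close> is the Christoffel term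
  \<open>\<Gamma>(v, W)\<close> of \<open>G\<close>.\<close>
lemma christoffel_form_metric_compatible:
  fixes G Gi :: "real^'n^'n" and a :: "'n \<Rightarrow> real^'n^'n" and v Y Z :: "real^'n"
  assumes GGi: "G ** Gi = mat 1" and G_sym: "transpose G = G" and a_sym: "\<And>i. transpose (a i) = a i"
  defines "\<Gamma> W \<equiv> (\<chi> k. \<Sum>i\<in>UNIV. \<Sum>j\<in>UNIV.
              (1/2 * (\<Sum>l\<in>UNIV. Gi$k$l * (a i $j$l + a j$i$l - a l$i$j))) * v$i * W$j)"
  shows "\<Gamma> Y \<bullet> (G *v Z) + Y \<bullet> (G *v \<Gamma> Z) = (\<Sum>i\<in>UNIV. v$i * (Y \<bullet> (a i *v Z)))"
proof -
  define c where "c i j l = a i $j$l + a j$i$l - a l$i$j" for i j l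
  define C where "C W = (\<chi> l. \<Sum>i\<in>UNIV. \<Sum>j\<in>UNIV. 1/2 * (v$i * W$j * c i j l))" for W :: "real^'n"
  have \<Gamma>_eq: "\<Gamma> W = Gi *v C W" for W
  proof -
    have "(\<Sum>i\<in>UNIV. \<Sum>j\<in>UNIV. (1/2 * (\<Sum>l\<in>UNIV. Gi$k$l * c i j l)) * v$i * W$j)
        = (\<Sum>l\<in>UNIV. Gi$k$l * (\<Sum>i\<in>UNIV. \<Sum>j\<in>UNIV. 1/2 * (v$i * W$j * c i j l)))" for k
    proof -
      have "(\<Sum>l\<in>UNIV. Gi$k$l * (\<Sum>i\<in>UNIV. \<Sum>j\<in>UNIV. 1/2 * (v$i * W$j * c i j l)))
          = (\<Sum>l\<in>UNIV. \<Sum>i\<in>UNIV. \<Sum>j\<in>UNIV. Gi$k$l * (1/2 * (v$i * W$j * c i j l)))"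
        by (simp add: sum_distrib_left)
      also have "\<dots> = (\<Sum>i\<in>UNIV. \<Sum>j\<in>UNIV. \<Sum>l\<in>UNIV. Gi$k$l * (1/2 * (v$i * W$j * c i j l)))"
        by (rule sum_rotate_three)
      also have "\<dots> = (\<Sum>i\<in>UNIV. \<Sum>j\<in>UNIV. (1/2 * (\<Sum>l\<in>UNIV. Gi$k$l * c i j l)) * v$i * W$j)"
        by (simp add: sum_distrib_left sum_distrib_right mult_ac)
      finally show ?thesis by simp
    qed
    then show ?thesis
      by (simp add: \<Gamma>_def c_def vec_eq_iff matrix_vector_mult_def C_def)
  qed
  have GGi_Z: "(Gi *v w) \<bullet> (G *v Z) = w \<bullet> Z" for w
  proof -
    have "(Gi *v w) \<bullet> (G *v Z) = Z \<bullet> (G *v (Gi *v w))"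
      by (rule symmetric_matrix_inner[OF G_sym])
    also have "\<dots> = w \<bullet> Z"
      by (simp add: matrix_vector_mul_assoc GGi inner_commute)
    finally show ?thesis .
  qed
  have GGi_Y: "Y \<bullet> (G *v (Gi *v w)) = Y \<bullet> w" for w
    by (simp add: matrix_vector_mul_assoc GGi)
  show ?thesis
    unfolding \<Gamma>_eq GGi_Z GGi_Y C_def c_def
    by (rule christoffel_first_kind_sum[OF a_sym])
qed

lemma smooth_on_coord_vf: "smooth_on U (coord_vf i)"
  unfolding coord_vf_def by (rule smooth_on_const)

lemma gm_coord_vf: "gm g (coord_vf i) Z x = (g x *v Z x) $ i"
  by (simp add: gm_def coord_vf_def inner_axis')

lemma piform_coord_vf: "piform g P (coord_vf i) x = (g x *v P x) $ i"
  by (simp add: piform_def gm_coord_vf)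

lemma sum_gm_coord_vf: "(\<Sum>i\<in>UNIV. gm g (coord_vf i) Z x * Y x $ i) = gm g Y Z x"
  unfolding gm_coord_vf by (simp add: gm_def inner_vec_def mult.commute)

lemma sum_piform_coord_vf: "(\<Sum>i\<in>UNIV. piform g P (coord_vf i) x * Y x $ i) = piform g P Y x"
  by (simp add: piform_def sum_gm_coord_vf)

lemma sum_coord_vf_diagonal: "(\<Sum>i\<in>(UNIV::'n::finite set). coord_vf i x $ i) = real CARD('n)"
  by (simp add: coord_vf_def)

section \<open>The Levi-Civita connection of a metric chart\<close>

lemma lc_nabla_add:
  assumes "A differentiable (at x)" "B differentiable (at x)"
  shows "lc_nabla g X (\<lambda>y. A y + B y) x = lc_nabla g X A x + lc_nabla g X B x"
  unfolding lc_nabla_def ddir_def frechet_derivative_add[OF assms]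
  by (simp add: vec_eq_iff algebra_simps sum.distrib)

lemma lc_nabla_diff:
  assumes "A differentiable (at x)" "B differentiable (at x)"
  shows "lc_nabla g X (\<lambda>y. A y - B y) x = lc_nabla g X A x - lc_nabla g X B x"
  unfolding lc_nabla_def ddir_def frechet_derivative_diff[OF assms]
  by (simp add: vec_eq_iff algebra_simps sum_subtractf)

lemma lc_nabla_scaleR:
  assumes "f differentiable (at x)" "V differentiable (at x)"
  shows "lc_nabla g X (\<lambda>y. f y *\<^sub>R V y) x = ddir f X x *\<^sub>R V x + f x *\<^sub>R lc_nabla g X V x"
  unfolding lc_nabla_def ddir_def frechet_derivative_scaleR[OF assms]
  by (simp add: vec_eq_iff algebra_simps sum_distrib_left)

lemma lc_nabla_cong:
  assumes "open U" "x \<in> U" "\<And>y. y \<in> U \<Longrightarrow> V y = W y" "V differentiable (at x)"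
  shows "lc_nabla g X V x = lc_nabla g X W x"
  using frechet_derivative_transform_within_open[OF assms(4,1,2)] assms(2,3)
  unfolding lc_nabla_def ddir_def by simp

lemma lc_nabla_pointwise: "lc_nabla g X V x = lc_nabla g (\<lambda>_. X x) V x"
  by (simp add: lc_nabla_def ddir_def)

locale metric_chart =
  fixes U :: "(real^'n::finite) set" and g :: "real^'n \<Rightarrow> real^'n^'n"
  assumes open_U: "open U"
    and smooth_g: "smooth_on U g"
    and symmetric_g: "x \<in> U \<Longrightarrow> transpose (g x) = g x"
    and invertible_g: "x \<in> U \<Longrightarrow> invertible (g x)"

lemma lorentzian_metric_imp_metric_chart:
  fixes U :: "(real^'n::finite) set"
  assumes "open U" and lor: "lorentzian_metric U g"
  shows "metric_chart U g"
proof
  fix x assume x: "x \<in> U"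
  then obtain i0 and A :: "real^'n^'n" where "invertible A"
    and diag: "transpose A ** g x ** A = (\<chi> i j. if i = j then (if i = i0 then -1 else 1) else 0)"
    using lor unfolding lorentzian_metric_def by blast
  have "det (transpose A ** g x ** A) * det (transpose A ** g x ** A) = 1"
    unfolding diag det_mul[symmetric] sign_diagonal_squared by simp
  then show "invertible (g x)"
    by (auto simp: det_mul invertible_det_nz)
qed (use assms in \<open>auto simp: lorentzian_metric_def\<close>)

context metric_chart
begin

lemma differentiable_on_imp_at: "f differentiable_on U \<Longrightarrow> x \<in> U \<Longrightarrow> f differentiable (at x)"
  using differentiable_on_eq_differentiable_at[OF open_U] by blast

lemma smooth_on_imp_at: "smooth_on U f \<Longrightarrow> x \<in> U \<Longrightarrow> f differentiable (at x)"
  by (intro differentiable_on_imp_at smooth_on_imp_differentiable_on)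

lemma g_commute: "x \<in> U \<Longrightarrow> g x $ i $ j = g x $ j $ i"
  by (rule symmetric_matrix_entry[OF symmetric_g])

lemma gm_commute: "x \<in> U \<Longrightarrow> gm g X Y x = gm g Y X x"
  unfolding gm_def by (rule symmetric_matrix_inner[OF symmetric_g])

lemma frechet_derivative_g_commute:
  assumes x: "x \<in> U"
  shows "frechet_derivative g (at x) v $ i $ j = frechet_derivative g (at x) v $ j $ i"
proof -
  have g: "g differentiable (at x)"
    using smooth_on_imp_at[OF smooth_g x] .
  have gi: "(\<lambda>y. g y $ i) differentiable (at x)" for i
    using g by (rule differentiable_vec_nth)
  have "frechet_derivative g (at x) v $ i $ j = frechet_derivative (\<lambda>y. g y $ i $ j) (at x) v"
    by (simp add: frechet_derivative_vec_nth g gi)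
  also have "\<dots> = frechet_derivative (\<lambda>y. g y $ j $ i) (at x) v"
    by (rule fun_cong, rule frechet_derivative_transform_within_open[OF differentiable_vec_nth[OF gi] open_U x])
      (simp add: g_commute)
  also have "\<dots> = frechet_derivative g (at x) v $ j $ i"
    by (simp add: frechet_derivative_vec_nth g gi)
  finally show ?thesis .
qed

lemma symmetric_frechet_derivative_g:
  "x \<in> U \<Longrightarrow> transpose (frechet_derivative g (at x) v) = frechet_derivative g (at x) v"
  using frechet_derivative_g_commute by (simp add: transpose_def vec_eq_iff)

lemma differentiable_on_gm:
  assumes "Y differentiable_on U" "Z differentiable_on U"
  shows "gm g Y Z differentiable_on U"
  unfolding gm_def[abs_def]
  using assms smooth_on_imp_differentiable_on[OF smooth_g]
  by (intro differentiable_on_inner differentiable_on_matrix_vector_mult)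

lemma differentiable_on_christoffel: "(\<lambda>y. christoffel g y k i j) differentiable_on U"
proof -
  have Dg: "(\<lambda>y. frechet_derivative g (at y) v $ i $ j) differentiable_on U" for v i j
    by (intro differentiable_on_vec_nth smooth_on_imp_differentiable_on smooth_on_frechet_derivative smooth_g)
  have inv: "(\<lambda>y. matrix_inv (g y) $ k $ l) differentiable_on U" for l
    by (intro differentiable_on_matrix_inv_entry smooth_on_imp_differentiable_on smooth_g invertible_g)
  show ?thesis
    unfolding christoffel_def
    by (intro differentiable_on_mult differentiable_on_const differentiable_on_sum differentiable_on_add
        differentiable_on_diff finite Dg inv)
qed

lemma differentiable_on_frechet_derivative_apply:
  assumes Y: "Y differentiable_on U" and Z: "smooth_on U Z"
  shows "(\<lambda>y. frechet_derivative Z (at y) (Y y)) differentiable_on U"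
proof (rule differentiable_on_cong)
  have "(\<lambda>y. frechet_derivative Z (at y) v) differentiable_on U" for v
    using Z by (intro smooth_on_imp_differentiable_on smooth_on_frechet_derivative)
  with Y show "(\<lambda>y. \<Sum>i\<in>UNIV. Y y $ i *\<^sub>R frechet_derivative Z (at y) (axis i 1)) differentiable_on U"
    by (intro differentiable_on_sum differentiable_on_scaleR differentiable_on_vec_nth finite)
  show "(\<Sum>i\<in>UNIV. Y y $ i *\<^sub>R frechet_derivative Z (at y) (axis i 1)) = frechet_derivative Z (at y) (Y y)"
    if "y \<in> U" for y
    using linear_apply_eq_sum_axis[OF linear_frechet_derivative[OF smooth_on_imp_at[OF Z that]], of "Y y"]
    by simp
qed

lemma differentiable_on_lc_nabla:
  assumes Y: "Y differentiable_on U" and Z: "smooth_on U Z"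
  shows "lc_nabla g Y Z differentiable_on U"
  unfolding lc_nabla_def[abs_def] ddir_def
  using Y Z smooth_on_imp_differentiable_on[OF Z]
  by (intro differentiable_on_add differentiable_on_frechet_derivative_apply differentiable_on_vec_lambda
      differentiable_on_sum differentiable_on_mult differentiable_on_christoffel differentiable_on_vec_nth
      finite)

lemma lc_nabla_metric_compatible:
  assumes x: "x \<in> U" and Y: "Y differentiable (at x)" and Z: "Z differentiable (at x)"
  shows "ddir (gm g Y Z) X x = gm g (lc_nabla g X Y) Z x + gm g Y (lc_nabla g X Z) x"
proof -
  define v where "v = X x"
  define Dg where "Dg = frechet_derivative g (at x)"
  define \<Gamma> where "\<Gamma> W = (\<chi> k. \<Sum>i\<in>UNIV. \<Sum>j\<in>UNIV. christoffel g x k i j * v$i * W$j)" for W :: "real^'n"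
  have lc: "lc_nabla g X W x = frechet_derivative W (at x) v + \<Gamma> (W x)" for W
    by (simp add: lc_nabla_def ddir_def \<Gamma>_def v_def)
  have g: "g differentiable (at x)"
    using smooth_on_imp_at[OF smooth_g x] .
  have "\<Gamma> (Y x) \<bullet> (g x *v Z x) + Y x \<bullet> (g x *v \<Gamma> (Z x))
      = (\<Sum>i\<in>UNIV. v$i * (Y x \<bullet> (Dg (axis i 1) *v Z x)))"
    using christoffel_form_metric_compatible[OF invertible_matrix_inv(1)[OF invertible_g[OF x]]
        symmetric_g[OF x] symmetric_frechet_derivative_g[OF x], of "\<lambda>i. axis i 1" v "Y x" "Z x"]
    unfolding \<Gamma>_def Dg_def christoffel_def by simp
  also have "\<dots> = Y x \<bullet> (Dg v *v Z x)"
  proof -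
    have "linear (\<lambda>w. Y x \<bullet> (Dg w *v Z x))"
      unfolding Dg_def using linear_frechet_derivative[OF g]
      by (intro linearI) (simp_all add: linear_add linear_scale matrix_vector_mult_add_rdistrib
          inner_add_right scaleR_matrix_vector_assoc[symmetric])
    from linear_apply_eq_sum_axis[OF this, of v] show ?thesis
      by simp
  qed
  finally have \<Gamma>_terms: "\<Gamma> (Y x) \<bullet> (g x *v Z x) + Y x \<bullet> (g x *v \<Gamma> (Z x)) = Y x \<bullet> (Dg v *v Z x)" .
  have "gm g (lc_nabla g X Y) Z x + gm g Y (lc_nabla g X Z) x
      = frechet_derivative Y (at x) v \<bullet> (g x *v Z x) + \<Gamma> (Y x) \<bullet> (g x *v Z x)
        + Y x \<bullet> (g x *v frechet_derivative Z (at x) v) + Y x \<bullet> (g x *v \<Gamma> (Z x))"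
    unfolding gm_def lc by (simp only: inner_add_left inner_add_right matrix_vector_right_distrib)
  moreover have "ddir (gm g Y Z) X x = frechet_derivative Y (at x) v \<bullet> (g x *v Z x)
      + Y x \<bullet> (g x *v frechet_derivative Z (at x) v) + Y x \<bullet> (Dg v *v Z x)"
    unfolding ddir_def frechet_derivative_gm[OF Y Z g] v_def Dg_def ..
  ultimately show ?thesis
    using \<Gamma>_terms by linarith
qed

lemma christoffel_commute: "x \<in> U \<Longrightarrow> christoffel g x k i j = christoffel g x k j i"
  unfolding christoffel_def using frechet_derivative_g_commute by (simp add: algebra_simps)

lemma lie_bracket_eq_lc_nabla:
  assumes x: "x \<in> U"
  shows "lie_bracket X Y x = lc_nabla g X Y x - lc_nabla g Y X x"
proof -
  have "(\<Sum>i\<in>UNIV. \<Sum>j\<in>UNIV. christoffel g x k i j * X x $ i * Y x $ j)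
      = (\<Sum>i\<in>UNIV. \<Sum>j\<in>UNIV. christoffel g x k i j * Y x $ i * X x $ j)" for k
    by (subst sum.swap) (simp add: christoffel_commute[OF x] mult_ac)
  then show ?thesis
    unfolding lie_bracket_def lc_nabla_def by (simp add: vec_eq_iff)
qed

end

section \<open>A unit timelike concircular vector field\<close>

locale unit_concircular = metric_chart U g for U :: "(real^'n::finite) set" and g +
  fixes P :: "'n vfield" and \<omega> :: "real^'n \<Rightarrow> real"
  assumes smooth_P: "smooth_on U P"
    and concircular_P: "concircular U g P \<omega>"
    and unit_P: "x \<in> U \<Longrightarrow> gm g P P x = -1"
begin

lemma differentiable_on_P: "P differentiable_on U"
  using smooth_P by (rule smooth_on_imp_differentiable_on)

lemma differentiable_on_piform: "Z differentiable_on U \<Longrightarrow> piform g P Z differentiable_on U"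
  unfolding piform_def[abs_def] using differentiable_on_gm[OF _ differentiable_on_P] by simp

text \<open>The definition constrains only smooth \<open>X\<close>, but both sides depend on \<open>X\<close> only through
  \<open>X x\<close>, so it applies to the constant field with value \<open>X x\<close>.\<close>
lemma concircular_at:
  assumes x: "x \<in> U" and Y: "smooth_on U Y"
  shows "cov_piform g P X Y x - piform g P X x * piform g P Y x = \<omega> x * gm g X Y x"
proof -
  have "cov_piform g P (\<lambda>_. X x) Y x - piform g P (\<lambda>_. X x) x * piform g P Y x = \<omega> x * gm g (\<lambda>_. X x) Y x"
    using concircular_P x Y smooth_on_const unfolding concircular_def by blast
  moreover have "cov_piform g P (\<lambda>_. X x) Y x = cov_piform g P X Y x"
    unfolding cov_piform_def ddir_def using lc_nabla_pointwise[of g X Y x] by (simp add: piform_def gm_def)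
  ultimately show ?thesis
    by (simp add: piform_def gm_def)
qed

lemma lc_nabla_P_concircular:
  assumes x: "x \<in> U"
  shows "lc_nabla g X P x = \<omega> x *\<^sub>R X x + piform g P X x *\<^sub>R P x"
proof -
  define w where "w = lc_nabla g X P x - \<omega> x *\<^sub>R X x - piform g P X x *\<^sub>R P x"
  have "(g x *v w) $ j = 0" for j
  proof -
    have "ddir (piform g P (coord_vf j)) X x = gm g (lc_nabla g X (coord_vf j)) P x + gm g (coord_vf j) (lc_nabla g X P) x"
      unfolding piform_def[abs_def]
      using lc_nabla_metric_compatible[OF x smooth_on_imp_at[OF smooth_on_coord_vf x] smooth_on_imp_at[OF smooth_P x]]
      by simp
    then have "cov_piform g P X (coord_vf j) x = gm g (coord_vf j) (lc_nabla g X P) x"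
      unfolding cov_piform_def by (simp add: piform_def)
    with concircular_at[OF x smooth_on_coord_vf, of X j] gm_commute[OF x, of X "coord_vf j"]
    have "gm g (coord_vf j) (lc_nabla g X P) x - piform g P X x * gm g (coord_vf j) P x
        - \<omega> x * gm g (coord_vf j) X x = 0"
      by (simp add: piform_def)
    then show ?thesis
      unfolding w_def gm_coord_vf
      by (simp add: matrix_vector_mult_diff_distrib matrix_vector_mult_scaleR)
  qed
  then have "g x *v w = 0"
    by (simp add: vec_eq_iff)
  then have "matrix_inv (g x) *v (g x *v w) = 0"
    by simp
  then have "w = 0"
    by (simp add: matrix_vector_mul_assoc invertible_matrix_inv(2)[OF invertible_g[OF x]])
  then show ?thesis
    unfolding w_def by (simp add: algebra_simps)
qed

text \<open>Differentiating \<open>g(P,P) = -1\<close> along \<open>P\<close> forces the concircular factor to be \<open>1\<close>.\<close>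
lemma concircular_factor_eq_1:
  assumes x: "x \<in> U"
  shows "\<omega> x = 1"
proof -
  have P: "P differentiable (at x)"
    using smooth_on_imp_at[OF smooth_P x] .
  have "ddir (gm g P P) P x = ddir (\<lambda>_. -1::real) P x"
    unfolding ddir_def
    using frechet_derivative_transform_within_open[OF _ open_U x, of "gm g P P" "\<lambda>_. -1"] unit_P
      differentiable_on_imp_at[OF differentiable_on_gm[OF differentiable_on_P differentiable_on_P] x]
    by simp
  then have "gm g (lc_nabla g P P) P x + gm g P (lc_nabla g P P) x = 0"
    using lc_nabla_metric_compatible[OF x P P] by (simp add: ddir_def)
  then have "gm g (lc_nabla g P P) P x = 0"
    using gm_commute[OF x, of P "lc_nabla g P P"] by simp
  moreover have "lc_nabla g P P x = (\<omega> x - 1) *\<^sub>R P x"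
    using lc_nabla_P_concircular[OF x, of P] unit_P[OF x] by (simp add: piform_def algebra_simps)
  ultimately have "(\<omega> x - 1) * gm g P P x = 0"
    by (simp add: gm_def)
  then show ?thesis
    using unit_P[OF x] by simp
qed

lemma lc_nabla_P: "x \<in> U \<Longrightarrow> lc_nabla g X P x = X x + piform g P X x *\<^sub>R P x"
  using lc_nabla_P_concircular concircular_factor_eq_1 by simp

lemma ddir_piform:
  assumes "x \<in> U" "smooth_on U Y"
  shows "ddir (piform g P Y) X x = piform g P X x * piform g P Y x + gm g X Y x + piform g P (lc_nabla g X Y) x"
  using concircular_at[OF assms, of X] concircular_factor_eq_1[OF assms(1)]
  unfolding cov_piform_def by simp

section \<open>Curvature\<close>

lemma lc_nabla_nabla1:
  assumes x: "x \<in> U" and Y: "smooth_on U Y" and Z: "smooth_on U Z"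
  shows "lc_nabla g X (nabla1 g P Y Z) x = lc_nabla g X (lc_nabla g Y Z) x
     + (ddir (piform g P Z) X x *\<^sub>R Y x + piform g P Z x *\<^sub>R lc_nabla g X Y x)
     - (ddir (gm g Y Z) X x *\<^sub>R P x + gm g Y Z x *\<^sub>R lc_nabla g X P x)"
proof -
  have Y1: "Y differentiable_on U" and Z1: "Z differentiable_on U"
    using Y Z by (simp_all add: smooth_on_imp_differentiable_on)
  have "nabla1 g P Y Z = (\<lambda>y. (lc_nabla g Y Z y + piform g P Z y *\<^sub>R Y y) - gm g Y Z y *\<^sub>R P y)"
    by (simp add: fun_eq_iff nabla1_def)
  moreover have "lc_nabla g Y Z differentiable_on U"
    using differentiable_on_lc_nabla[OF Y1 Z] .
  moreover have "piform g P Z differentiable_on U" "gm g Y Z differentiable_on U"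
    using Y1 Z1 by (simp_all add: differentiable_on_piform differentiable_on_gm)
  ultimately show ?thesis
    using Y1 differentiable_on_P
    by (simp add: lc_nabla_diff lc_nabla_add lc_nabla_scaleR differentiable_on_imp_at[OF _ x])
qed

lemma lc_nabla_torsion1:
  assumes x: "x \<in> U" and Y: "smooth_on U Y" and Z: "smooth_on U Z"
  shows "lc_nabla g X (torsion1 g P Y Z) x =
       (ddir (piform g P Z) X x *\<^sub>R Y x + piform g P Z x *\<^sub>R lc_nabla g X Y x)
     - (ddir (piform g P Y) X x *\<^sub>R Z x + piform g P Y x *\<^sub>R lc_nabla g X Z x)"
proof -
  have Y1: "Y differentiable_on U" and Z1: "Z differentiable_on U"
    using Y Z by (simp_all add: smooth_on_imp_differentiable_on)
  have "torsion1 g P Y Z = (\<lambda>y. piform g P Z y *\<^sub>R Y y - piform g P Y y *\<^sub>R Z y)"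
    by (simp add: fun_eq_iff torsion1_def)
  then show ?thesis
    using Y1 Z1 differentiable_on_piform[OF Y1] differentiable_on_piform[OF Z1]
    by (simp add: lc_nabla_diff lc_nabla_scaleR differentiable_on_imp_at[OF _ x])
qed

text \<open>Once \<open>lc_nabla_P\<close> and \<open>ddir_piform\<close> have eliminated every derivative of \<open>P\<close> and \<open>\<pi>\<close>,
  only the curvature of \<open>lc_nabla g\<close> and algebraic terms in \<open>g\<close> and \<open>\<pi>\<close> remain.\<close>
lemma curv0_eq:
  assumes x: "x \<in> U" and X: "smooth_on U X" and Y: "smooth_on U Y" and Z: "smooth_on U Z"
  shows "curv0 g P X Y Z x = curv (lc_nabla g) X Y Z x + gm g X Z x *\<^sub>R Y x - gm g Y Z x *\<^sub>R X x
     - (1/4 * piform g P Z x) *\<^sub>R (piform g P Y x *\<^sub>R X x - piform g P X x *\<^sub>R Y x)"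
proof -
  have X1: "X differentiable (at x)" and Y1: "Y differentiable (at x)" and Z1: "Z differentiable (at x)"
    using smooth_on_imp_at x X Y Z by auto
  define G where "G = g x"
  have symG: "\<And>u w. u \<bullet> (G *v w) = w \<bullet> (G *v u)"
    unfolding G_def using symmetric_matrix_inner[OF symmetric_g[OF x]] .
  have PP: "P x \<bullet> (G *v P x) = -1"
    using unit_P[OF x] by (simp add: gm_def G_def)
  show ?thesis
    unfolding curv0_def Let_def curv_def cov_torsion_def
    apply (simp only: nabla1_def torsion1_def lc_nabla_nabla1[OF x Y Z] lc_nabla_nabla1[OF x X Z]
        lc_nabla_torsion1[OF x Y Z] lc_nabla_torsion1[OF x X Z] ddir_piform[OF x X] ddir_piform[OF x Y]
        ddir_piform[OF x Z] lc_nabla_metric_compatible[OF x Y1 Z1] lc_nabla_metric_compatible[OF x X1 Z1]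
        lc_nabla_P[OF x] lie_bracket_eq_lc_nabla[OF x])
    apply (simp only: piform_def gm_def G_def[symmetric] nabla1_def torsion1_def
        lie_bracket_eq_lc_nabla[OF x] lc_nabla_P[OF x])
    apply (simp add: inner_add_left inner_add_right inner_diff_left inner_diff_right
        matrix_vector_right_distrib matrix_vector_mult_diff_distrib matrix_vector_mult_scaleR PP)
    apply (simp add: symG)
    apply (simp add: vec_eq_iff algebra_simps)
    done
qed

lemma curv_lc_nabla_P_P:
  assumes x: "x \<in> U" and X: "smooth_on U X"
  shows "curv (lc_nabla g) X P P x = - X x - piform g P X x *\<^sub>R P x"
proof -
  have X1: "X differentiable_on U"
    using X by (rule smooth_on_imp_differentiable_on)
  define G where "G = g x"
  have symG: "\<And>u w. u \<bullet> (G *v w) = w \<bullet> (G *v u)"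
    unfolding G_def using symmetric_matrix_inner[OF symmetric_g[OF x]] .
  have PP: "P x \<bullet> (G *v P x) = -1"
    using unit_P[OF x] by (simp add: gm_def G_def)
  have P_geodesic: "lc_nabla g P P y = 0" if "y \<in> U" for y
    using lc_nabla_P[OF that, of P] unit_P[OF that] by (simp add: piform_def)
  have "lc_nabla g X (lc_nabla g P P) x = lc_nabla g X (\<lambda>_. 0) x"
    using lc_nabla_cong[OF open_U x P_geodesic]
      differentiable_on_imp_at[OF differentiable_on_lc_nabla[OF differentiable_on_P smooth_P] x]
    by simp
  then have XPP: "lc_nabla g X (lc_nabla g P P) x = 0"
    by (simp add: lc_nabla_def ddir_def vec_eq_iff)
  have "lc_nabla g P (lc_nabla g X P) x = lc_nabla g P (\<lambda>y. X y + piform g P X y *\<^sub>R P y) x"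
    using lc_nabla_cong[OF open_U x lc_nabla_P]
      differentiable_on_imp_at[OF differentiable_on_lc_nabla[OF X1 smooth_P] x]
    by simp
  also have "\<dots> = lc_nabla g P X x + (ddir (piform g P X) P x *\<^sub>R P x + piform g P X x *\<^sub>R lc_nabla g P P x)"
    using X1 differentiable_on_P differentiable_on_piform[OF X1]
    by (simp add: lc_nabla_add lc_nabla_scaleR differentiable_on_imp_at[OF _ x])
  finally have PXP: "lc_nabla g P (lc_nabla g X P) x
      = lc_nabla g P X x + (ddir (piform g P X) P x *\<^sub>R P x + piform g P X x *\<^sub>R lc_nabla g P P x)" .
  show ?thesis
    unfolding curv_def XPP PXP
    apply (simp only: P_geodesic[OF x] ddir_piform[OF x X] lc_nabla_P[OF x] lie_bracket_eq_lc_nabla[OF x])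
    apply (simp only: piform_def gm_def G_def[symmetric] lie_bracket_eq_lc_nabla[OF x] lc_nabla_P[OF x])
    apply (simp add: inner_add_left inner_add_right inner_diff_left inner_diff_right
        matrix_vector_right_distrib matrix_vector_mult_diff_distrib matrix_vector_mult_scaleR PP)
    apply (simp add: symG)
    done
qed

lemma ricci0_eq:
  assumes x: "x \<in> U" and Y: "smooth_on U Y" and Z: "smooth_on U Z"
  shows "ricci0 g P Y Z x = ricci_g g Y Z x - (real CARD('n) - 1) * gm g Y Z x
     - (real CARD('n) - 1) / 4 * (piform g P Y x * piform g P Z x)"
proof -
  have "ricci0 g P Y Z x = (\<Sum>i\<in>UNIV. curv (lc_nabla g) (coord_vf i) Y Z x $ i
      + gm g (coord_vf i) Z x * Y x $ i - gm g Y Z x * coord_vf i x $ i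
      - (1/4 * piform g P Z x) * (piform g P Y x * coord_vf i x $ i - piform g P (coord_vf i) x * Y x $ i))"
    unfolding ricci0_def ricci_def
    by (rule sum.cong) (simp_all add: curv0_eq[OF x smooth_on_coord_vf Y Z])
  also have "\<dots> = (\<Sum>i\<in>UNIV. curv (lc_nabla g) (coord_vf i) Y Z x $ i)
      + (\<Sum>i\<in>UNIV. gm g (coord_vf i) Z x * Y x $ i) - gm g Y Z x * (\<Sum>i\<in>UNIV. coord_vf i x $ i)
      - (1/4 * piform g P Z x) * (piform g P Y x * (\<Sum>i\<in>UNIV. coord_vf i x $ i)
         - (\<Sum>i\<in>UNIV. piform g P (coord_vf i) x * Y x $ i))"
    by (simp add: sum.distrib sum_subtractf sum_distrib_left right_diff_distrib)
  finally show ?thesis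
    unfolding sum_gm_coord_vf sum_piform_coord_vf sum_coord_vf_diagonal ricci_g_def ricci_def
    by (simp add: field_simps)
qed

lemma ricci_g_P_P: "x \<in> U \<Longrightarrow> ricci_g g P P x = - (real CARD('n) - 1)"
proof -
  assume x: "x \<in> U"
  have "ricci_g g P P x = (\<Sum>i\<in>UNIV. - coord_vf i x $ i - piform g P (coord_vf i) x * P x $ i)"
    unfolding ricci_g_def ricci_def
    by (rule sum.cong) (simp_all add: curv_lc_nabla_P_P[OF x smooth_on_coord_vf])
  also have "\<dots> = - real CARD('n) - gm g P P x"
    by (simp add: sum_subtractf sum_piform_coord_vf sum_coord_vf_diagonal sum_negf) (simp add: piform_def)
  finally show ?thesis
    using unit_P[OF x] by simp
qed

lemma scal_eq_of_coord_vf: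
  assumes x: "x \<in> U"
    and F: "\<And>i j. F (coord_vf i) (coord_vf j) x = a * gm g (coord_vf i) (coord_vf j) x
       + b * (piform g P (coord_vf i) x * piform g P (coord_vf j) x)"
  shows "scal g F x = a * real CARD('n) - b"
proof -
  define G where "G = g x"
  define Gi where "Gi = matrix_inv G"
  have GiG: "Gi ** G = mat 1"
    unfolding Gi_def G_def by (rule invertible_matrix_inv(2)[OF invertible_g[OF x]])
  have gm_coord: "gm g (coord_vf i) (coord_vf j) x = G $ i $ j" for i j
    unfolding gm_coord_vf G_def by (simp add: coord_vf_def matrix_vector_mult_axis)
  have trace_g: "(\<Sum>i\<in>UNIV. \<Sum>j\<in>UNIV. Gi $ i $ j * G $ i $ j) = real CARD('n)"
  proof -
    have "(\<Sum>j\<in>UNIV. Gi $ i $ j * G $ i $ j) = (Gi ** G) $ i $ i" for i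
      using g_commute[OF x] unfolding G_def by (simp add: matrix_matrix_mult_def)
    then show ?thesis
      by (simp add: GiG mat_def)
  qed
  have trace_pi: "(\<Sum>i\<in>UNIV. \<Sum>j\<in>UNIV. Gi $ i $ j * ((G *v P x) $ i * (G *v P x) $ j)) = -1"
  proof -
    have "(\<Sum>i\<in>UNIV. \<Sum>j\<in>UNIV. Gi $ i $ j * ((G *v P x) $ i * (G *v P x) $ j))
        = (G *v P x) \<bullet> (Gi *v (G *v P x))"
      by (simp add: inner_matrix_vector_mult_sum mult_ac)
    also have "\<dots> = P x \<bullet> (G *v P x)"
      by (simp add: matrix_vector_mul_assoc GiG inner_commute)
    also have "\<dots> = -1"
      using unit_P[OF x] by (simp add: gm_def G_def)
    finally show ?thesis .
  qed
  have "scal g F x = (\<Sum>i\<in>UNIV. \<Sum>j\<in>UNIV. a * (Gi $ i $ j * G $ i $ j)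
      + b * (Gi $ i $ j * ((G *v P x) $ i * (G *v P x) $ j)))"
    unfolding scal_def F gm_coord piform_coord_vf G_def[symmetric] Gi_def[symmetric]
    by (simp add: algebra_simps)
  also have "\<dots> = a * real CARD('n) - b"
    by (simp add: sum.distrib sum_distrib_left[symmetric] trace_g trace_pi)
  finally show ?thesis .
qed

text \<open>Evaluating \<open>Ric\<^sup>0 = c g\<close> at \<open>(P, P)\<close> determines \<open>c = (n - 1)/4\<close>.\<close>
lemma einstein_zeroth_iff_ricci_g:
  "einstein_zeroth U g P \<longleftrightarrow>
     (\<forall>Y Z. smooth_on U Y \<longrightarrow> smooth_on U Z \<longrightarrow>
        (\<forall>x\<in>U. ricci_g g Y Z x =
           (real CARD('n) - 1) / 4 * (5 * gm g Y Z x + piform g P Y x * piform g P Z x)))"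
    (is "_ \<longleftrightarrow> ?fluid")
proof
  assume einstein: "einstein_zeroth U g P"
  show ?fluid
  proof (intro allI impI ballI)
    fix Y Z :: "'n vfield" and x assume Y: "smooth_on U Y" and Z: "smooth_on U Z" and x: "x \<in> U"
    define c where "c = scal g (ricci0 g P) x / real CARD('n)"
    have ricci_g: "ricci_g g Y' Z' x = (c + (real CARD('n) - 1)) * gm g Y' Z' x
        + (real CARD('n) - 1) / 4 * (piform g P Y' x * piform g P Z' x)"
      if "smooth_on U Y'" "smooth_on U Z'" for Y' Z'
      using ricci0_eq[OF x that] einstein that x unfolding einstein_zeroth_def c_def
      by (simp add: algebra_simps)
    have "c = (real CARD('n) - 1) / 4"
      using ricci_g[OF smooth_P smooth_P] ricci_g_P_P[OF x] unit_P[OF x]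
      by (simp add: piform_def field_simps)
    with ricci_g[OF Y Z] have "ricci_g g Y Z x = ((real CARD('n) - 1) / 4 + (real CARD('n) - 1)) * gm g Y Z x
        + (real CARD('n) - 1) / 4 * (piform g P Y x * piform g P Z x)"
      by simp
    then show "ricci_g g Y Z x = (real CARD('n) - 1) / 4 * (5 * gm g Y Z x + piform g P Y x * piform g P Z x)"
      by (simp add: field_simps)
  qed
next
  assume fluid: ?fluid
  have ricci0: "ricci0 g P Y Z x = (real CARD('n) - 1) / 4 * gm g Y Z x"
    if "smooth_on U Y" "smooth_on U Z" "x \<in> U" for Y Z x
    using ricci0_eq[OF that(3,1,2)] fluid that by (simp add: field_simps)
  have factor: "scal g (ricci0 g P) x / real CARD('n) = (real CARD('n) - 1) / 4" if "x \<in> U" for x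
    using scal_eq_of_coord_vf[OF that, of "ricci0 g P" "(real CARD('n) - 1) / 4" 0]
      ricci0[OF smooth_on_coord_vf smooth_on_coord_vf that]
    by simp
  show "einstein_zeroth U g P"
    unfolding einstein_zeroth_def by (simp add: factor ricci0)
qed

lemma scal_ricci_g:
  assumes "\<forall>Y Z. smooth_on U Y \<longrightarrow> smooth_on U Z \<longrightarrow>
        (\<forall>x\<in>U. ricci_g g Y Z x =
           (real CARD('n) - 1) / 4 * (5 * gm g Y Z x + piform g P Y x * piform g P Z x))"
    and x: "x \<in> U"
  shows "4 * scal g (ricci_g g) x = (real CARD('n) - 1) * (5 * real CARD('n) - 1)"
proof -
  have "ricci_g g (coord_vf i) (coord_vf j) x = 5 * (real CARD('n) - 1) / 4 * gm g (coord_vf i) (coord_vf j) x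
      + (real CARD('n) - 1) / 4 * (piform g P (coord_vf i) x * piform g P (coord_vf j) x)" for i j
    using assms(1)[rule_format, OF smooth_on_coord_vf smooth_on_coord_vf x] by (simp add: algebra_simps)
  then have "scal g (ricci_g g) x = 5 * (real CARD('n) - 1) / 4 * real CARD('n) - (real CARD('n) - 1) / 4"
    by (rule scal_eq_of_coord_vf[OF x])
  then show ?thesis
    by (simp add: field_simps)
qed

end

theorem mainTheorem12:
  fixes U :: "(real^'n) set" and g :: "real^'n \<Rightarrow> real^'n^'n"
    and P :: "'n vfield" and \<omega> :: "real^'n \<Rightarrow> real"
  assumes "open U"
    and "CARD('n) \<ge> 3"
    and "lorentzian_metric U g"
    and "smooth_on U P"
    and "concircular U g P \<omega>"
    and "\<forall>x\<in>U. gm g P P x = -1"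
  shows "(einstein_zeroth U g P \<longleftrightarrow>
           (perfect_fluid U g P \<and>
            (\<forall>Y Z. smooth_on U Y \<longrightarrow> smooth_on U Z \<longrightarrow>
               (\<forall>x\<in>U. ricci_g g Y Z x =
                  (real CARD('n) - 1) / 4 * (5 * gm g Y Z x + piform g P Y x * piform g P Z x)))))
       \<and> (einstein_zeroth U g P \<longrightarrow>
           (\<forall>x\<in>U. 4 * scal g (ricci_g g) x = (real CARD('n) - 1) * (5 * real CARD('n) - 1)))"
proof -
  interpret metric_chart U g
    using lorentzian_metric_imp_metric_chart assms(1,3) .
  interpret unit_concircular U g P \<omega>
    by unfold_locales (use assms(4-6) in auto)
  have "perfect_fluid U g P"
    if "\<forall>Y Z. smooth_on U Y \<longrightarrow> smooth_on U Z \<longrightarrow>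
          (\<forall>x\<in>U. ricci_g g Y Z x =
             (real CARD('n) - 1) / 4 * (5 * gm g Y Z x + piform g P Y x * piform g P Z x))"
    unfolding perfect_fluid_def
    by (rule exI[of _ "\<lambda>_. 5 * (real CARD('n) - 1) / 4"], rule exI[of _ "\<lambda>_. (real CARD('n) - 1) / 4"])
      (use that in \<open>simp add: algebra_simps\<close>)
  then show ?thesis
    using einstein_zeroth_iff_ricci_g scal_ricci_g by blast
qed

end
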